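(* There is a constant $K$ depending only on $d$ and $S$ such that for every positive integer $R$ and every $L$ large enough that $\Omega_{2R+1}$ embeds in $\Lambda_L$ without wrap-around, $$\sum_{\{x,y\}\subset\Omega_{2R+1}:|x-y|=1}\bigl\|[[H_1',\mathbf{S}_x\cdot\mathbf{S}_y],H_1']\bigr\|\le KR^{d-2}.$$
   Context: Spin-$S$ operators $S_x^{(i)}$ ($i=1,2,3$) on sites of $\Lambda_L=\{-L+1,\dots,L\}^d$ with periodic boundary conditions, $[S_x^{(1)},S_x^{(2)}]=iS_x^{(3)}$ and cyclic, $\mathbf{S}_x\cdot\mathbf{S}_y=\sum_iS_x^{(i)}S_y^{(i)}$. For $x\in\mathbb{Z}^d$, $|x|_\infty=\max_i|x^{(i)}|$ and $\Omega_R=\{x:|x|_\infty\le R\}$. Define $f_x=1$ for $x\in\Omega_{R+1}$, $f_x=1-[|x|_\infty-(R+1)]/R$ for $x\in\Omega_{2R}\setminus\Omega_{R+1}$, and $f_x=0$ otherwise. $H_1'=\sum_{\{x,y\}\subset\Lambda_L:|x-y|=1}[S_x^{(1)}+S_y^{(1)}](f_x+f_y)$. *)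

theory Defs
  imports Complex_Main
begin

text \<open>Sites of Z^d are functions nat => int that vanish at coordinates i >= d.
  A basis configuration of the spin system assigns to each site of Lambda_L a
  local state k in {0..2S} (magnetic quantum number m = k - S), and 0 elsewhere.\<close>

type_synonym site = "nat \<Rightarrow> int"
type_synonym conf = "site \<Rightarrow> nat"
type_synonym op = "conf \<Rightarrow> conf \<Rightarrow> complex"

definition Lambda :: "nat \<Rightarrow> nat \<Rightarrow> site set" where
  "Lambda d L = {x. (\<forall>i<d. - int L + 1 \<le> x i \<and> x i \<le> int L) \<and> (\<forall>i\<ge>d. x i = 0)}"

definition supnorm :: "nat \<Rightarrow> site \<Rightarrow> int" where
  "supnorm d x = Max ((\<lambda>i. \<bar>x i\<bar>) ` {..<d})"

definition Omega :: "nat \<Rightarrow> int \<Rightarrow> site set" where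
  "Omega d R = {x. (\<forall>i<d. \<bar>x i\<bar> \<le> R) \<and> (\<forall>i\<ge>d. x i = 0)}"

definition adjZ :: "nat \<Rightarrow> site \<Rightarrow> site \<Rightarrow> bool" where
  "adjZ d x y \<longleftrightarrow> (\<Sum>i<d. (x i - y i)^2) = 1"

text \<open>Nearest neighbours on the torus Lambda_L (periodic boundary conditions, period 2L).\<close>
definition adjT :: "nat \<Rightarrow> nat \<Rightarrow> site \<Rightarrow> site \<Rightarrow> bool" where
  "adjT d L x y \<longleftrightarrow> (\<exists>i<d. (\<forall>j. j \<noteq> i \<longrightarrow> x j = y j) \<and>
      ((x i - y i) mod (2 * int L) = 1 \<or> (y i - x i) mod (2 * int L) = 1))"

definition edgesT :: "nat \<Rightarrow> nat \<Rightarrow> site set set" where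
  "edgesT d L = {{x, y} | x y. x \<in> Lambda d L \<and> y \<in> Lambda d L \<and> adjT d L x y}"

definition edgesZ :: "nat \<Rightarrow> site set \<Rightarrow> site set set" where
  "edgesZ d A = {{x, y} | x y. x \<in> A \<and> y \<in> A \<and> adjZ d x y}"

definition fcut :: "nat \<Rightarrow> nat \<Rightarrow> site \<Rightarrow> real" where
  "fcut d R x = (if x \<in> Omega d (int R + 1) then 1
      else if x \<in> Omega d (2 * int R) then 1 - (real_of_int (supnorm d x) - (real R + 1)) / real R
      else 0)"

text \<open>Standard spin-S matrices (twoS = 2S) in the basis k = 0..2S, m = k - S.\<close>
definition mval :: "nat \<Rightarrow> nat \<Rightarrow> real" where
  "mval twoS k = real k - real twoS / 2"

definition spinS :: "nat \<Rightarrow> real" where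
  "spinS twoS = real twoS / 2"

definition Splus :: "nat \<Rightarrow> nat \<Rightarrow> nat \<Rightarrow> complex" where
  "Splus twoS k l = (if k = l + 1 then
      complex_of_real (sqrt (spinS twoS * (spinS twoS + 1) - mval twoS l * (mval twoS l + 1))) else 0)"

definition Sminus :: "nat \<Rightarrow> nat \<Rightarrow> nat \<Rightarrow> complex" where
  "Sminus twoS k l = cnj (Splus twoS l k)"

definition spin :: "nat \<Rightarrow> nat \<Rightarrow> nat \<Rightarrow> nat \<Rightarrow> complex" where
  "spin twoS a k l =
     (if a = 1 then (Splus twoS k l + Sminus twoS k l) / 2
      else if a = 2 then (Splus twoS k l - Sminus twoS k l) / (2 * \<i>)
      else if a = 3 then (if k = l then complex_of_real (mval twoS k) else 0)
      else 0)"

definition confs :: "nat \<Rightarrow> nat \<Rightarrow> nat \<Rightarrow> conf set" where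
  "confs d twoS L = {\<sigma>. (\<forall>x\<in>Lambda d L. \<sigma> x \<le> twoS) \<and> (\<forall>x. x \<notin> Lambda d L \<longrightarrow> \<sigma> x = 0)}"

definition Sop :: "nat \<Rightarrow> site \<Rightarrow> nat \<Rightarrow> op" where
  "Sop twoS x a = (\<lambda>\<sigma> \<tau>. if (\<forall>z. z \<noteq> x \<longrightarrow> \<sigma> z = \<tau> z) then spin twoS a (\<sigma> x) (\<tau> x) else 0)"

definition opmult :: "conf set \<Rightarrow> op \<Rightarrow> op \<Rightarrow> op" where
  "opmult C A B = (\<lambda>\<sigma> \<tau>. \<Sum>\<rho>\<in>C. A \<sigma> \<rho> * B \<rho> \<tau>)"

definition opcomm :: "conf set \<Rightarrow> op \<Rightarrow> op \<Rightarrow> op" where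
  "opcomm C A B = (\<lambda>\<sigma> \<tau>. opmult C A B \<sigma> \<tau> - opmult C B A \<sigma> \<tau>)"

definition opnorm :: "conf set \<Rightarrow> op \<Rightarrow> real" where
  "opnorm C A = Sup {sqrt (\<Sum>\<sigma>\<in>C. (cmod (\<Sum>\<tau>\<in>C. A \<sigma> \<tau> * v \<tau>))^2) | v.
                      (\<Sum>\<sigma>\<in>C. (cmod (v \<sigma>))^2) \<le> 1}"

definition sdot :: "nat \<Rightarrow> nat \<Rightarrow> nat \<Rightarrow> site \<Rightarrow> site \<Rightarrow> op" where
  "sdot d twoS L x y = (\<lambda>\<sigma> \<tau>. \<Sum>a\<in>{1,2,3}. opmult (confs d twoS L) (Sop twoS x a) (Sop twoS y a) \<sigma> \<tau>)"

definition sdot_edge :: "nat \<Rightarrow> nat \<Rightarrow> nat \<Rightarrow> site set \<Rightarrow> op" where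
  "sdot_edge d twoS L e = (let p = (SOME p. e = {fst p, snd p}) in sdot d twoS L (fst p) (snd p))"

definition H1' :: "nat \<Rightarrow> nat \<Rightarrow> nat \<Rightarrow> nat \<Rightarrow> op" where
  "H1' d twoS L R = (\<lambda>\<sigma> \<tau>. \<Sum>e\<in>edgesT d L.
      complex_of_real (\<Sum>z\<in>e. fcut d R z) * (\<Sum>z\<in>e. Sop twoS z 1 \<sigma> \<tau>))"

end

theory Submission
  imports Defs "HOL-Analysis.Convex"
begin

text \<open>Regrouping the bonds at each site writes H_1' as a transverse field
  \<Sum>_z h_z S_z^(1), where h_z sums f over the bonds at z. The total spin
  S_x^(1) + S_y^(1) commutes with the rotation invariant S_x\<cdot>S_y, hence
  [[H_1', S_x\<cdot>S_y], H_1'] = (h_x - h_y)^2 [[S_x^(1), S_x\<cdot>S_y], S_x^(1)].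
  The cutoff f is 1/R-Lipschitz for the sup norm, so |h_x - h_y| \<le> 4d/R on
  every bond, and the remaining double commutator of local spin operators has
  norm bounded in terms of S alone (Schur test). Summing over the O(R^d) bonds
  of \<Omega>_(2R+1) gives the bound K R^(d-2).\<close>

lemma Lambda_subset_Omega: "Lambda d L \<subseteq> Omega d (int L)"
  unfolding Lambda_def Omega_def by auto

lemma finite_card_Omega: "finite (Omega d N) \<and> card (Omega d N) \<le> nat (2 * N + 1) ^ d"
proof (induction d)
  case 0
  have "Omega 0 N = {\<lambda>_. 0}" unfolding Omega_def by auto
  then show ?case by simp
next
  case (Suc d)
  let ?ext = "\<lambda>(x, c). x(d := c)"
  have sub: "Omega (Suc d) N \<subseteq> ?ext ` (Omega d N \<times> {-N..N})"
  proof
    fix y assume y: "y \<in> Omega (Suc d) N"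
    then have "y(d := 0) \<in> Omega d N" "y d \<in> {-N..N}" unfolding Omega_def by auto
    then show "y \<in> ?ext ` (Omega d N \<times> {-N..N})"
      by (intro image_eqI[where x="(y(d := 0), y d)"]) auto
  qed
  have fin: "finite (?ext ` (Omega d N \<times> {-N..N}))" using Suc by auto
  have "card (Omega (Suc d) N) \<le> card (?ext ` (Omega d N \<times> {-N..N}))"
    by (rule card_mono[OF fin sub])
  also have "\<dots> \<le> card (Omega d N) * nat (2 * N + 1)"
    using card_image_le[of "Omega d N \<times> {-N..N}" ?ext] Suc by (simp add: card_cartesian_product)
  also have "\<dots> \<le> nat (2 * N + 1) ^ Suc d" using Suc by simp
  finally show ?case using finite_subset[OF sub fin] by simp
qed

lemma finite_Lambda: "finite (Lambda d L)"
  using finite_card_Omega finite_subset[OF Lambda_subset_Omega] by blast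

lemma finite_confs: "finite (confs d n L)"
proof -
  have "confs d n L \<subseteq>
      {f. \<forall>x. (x \<in> Lambda d L \<longrightarrow> f x \<in> {..n}) \<and> (x \<notin> Lambda d L \<longrightarrow> f x = 0)}"
    unfolding confs_def by auto
  then show ?thesis
    by (rule finite_subset) (rule finite_set_of_finite_funs[OF finite_Lambda], simp)
qed

lemma confs_le: "\<sigma> \<in> confs d n L \<Longrightarrow> x \<in> Lambda d L \<Longrightarrow> \<sigma> x \<le> n"
  unfolding confs_def by auto

lemma confs_upd: "\<sigma> \<in> confs d n L \<Longrightarrow> x \<in> Lambda d L \<Longrightarrow> j \<le> n \<Longrightarrow> \<sigma>(x := j) \<in> confs d n L"
  unfolding confs_def by auto

subsection \<open>Matrices over a set of configurations\<close>

text \<open>The product opmult C only sees entries indexed by C, so identities between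
  operators are only required to hold on C.\<close>

definition op_eq_on :: "conf set \<Rightarrow> op \<Rightarrow> op \<Rightarrow> bool" where
  "op_eq_on C M N \<longleftrightarrow> (\<forall>\<sigma>\<in>C. \<forall>\<tau>\<in>C. M \<sigma> \<tau> = N \<sigma> \<tau>)"

definition opadd :: "op \<Rightarrow> op \<Rightarrow> op" where
  "opadd M N = (\<lambda>\<sigma> \<tau>. M \<sigma> \<tau> + N \<sigma> \<tau>)"

definition opsub :: "op \<Rightarrow> op \<Rightarrow> op" where
  "opsub M N = (\<lambda>\<sigma> \<tau>. M \<sigma> \<tau> - N \<sigma> \<tau>)"

definition opscale :: "complex \<Rightarrow> op \<Rightarrow> op" where
  "opscale c M = (\<lambda>\<sigma> \<tau>. c * M \<sigma> \<tau>)"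

definition opsum :: "'i set \<Rightarrow> ('i \<Rightarrow> op) \<Rightarrow> op" where
  "opsum I F = (\<lambda>\<sigma> \<tau>. \<Sum>i\<in>I. F i \<sigma> \<tau>)"

lemma op_eq_on_refl [simp]: "op_eq_on C M M"
  by (simp add: op_eq_on_def)

lemma op_eq_on_trans [trans]: "op_eq_on C M N \<Longrightarrow> op_eq_on C N K \<Longrightarrow> op_eq_on C M K"
  by (simp add: op_eq_on_def)

lemma opcomm_eq_opsub: "opcomm C A B = opsub (opmult C A B) (opmult C B A)"
  by (simp add: opcomm_def opsub_def)

lemma opmult_assoc: "opmult C (opmult C A B) D = opmult C A (opmult C B D)"
  unfolding opmult_def
  by (auto simp: sum_distrib_left sum_distrib_right mult.assoc intro!: ext) (rule sum.swap)

lemma opmult_cong: "op_eq_on C M M' \<Longrightarrow> op_eq_on C N N' \<Longrightarrow> op_eq_on C (opmult C M N) (opmult C M' N')"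
  unfolding op_eq_on_def opmult_def by auto

lemma opmult_eq_on_left: "op_eq_on C M M' \<Longrightarrow> \<sigma> \<in> C \<Longrightarrow> opmult C M N \<sigma> \<tau> = opmult C M' N \<sigma> \<tau>"
  unfolding op_eq_on_def opmult_def by auto

lemma opmult_eq_on_right: "op_eq_on C N N' \<Longrightarrow> \<tau> \<in> C \<Longrightarrow> opmult C M N \<sigma> \<tau> = opmult C M N' \<sigma> \<tau>"
  unfolding op_eq_on_def opmult_def by auto

lemma opadd_cong: "op_eq_on C M M' \<Longrightarrow> op_eq_on C N N' \<Longrightarrow> op_eq_on C (opadd M N) (opadd M' N')"
  unfolding op_eq_on_def opadd_def by auto

lemma opsub_cong: "op_eq_on C M M' \<Longrightarrow> op_eq_on C N N' \<Longrightarrow> op_eq_on C (opsub M N) (opsub M' N')"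
  unfolding op_eq_on_def opsub_def by auto

lemma opscale_cong: "op_eq_on C M M' \<Longrightarrow> op_eq_on C (opscale c M) (opscale c M')"
  unfolding op_eq_on_def opscale_def by auto

lemma opsum_cong: "(\<And>i. i \<in> I \<Longrightarrow> op_eq_on C (F i) (G i)) \<Longrightarrow> op_eq_on C (opsum I F) (opsum I G)"
  unfolding op_eq_on_def opsum_def by (auto intro!: sum.cong)

lemma opcomm_cong: "op_eq_on C M M' \<Longrightarrow> op_eq_on C N N' \<Longrightarrow> op_eq_on C (opcomm C M N) (opcomm C M' N')"
  unfolding opcomm_eq_opsub by (intro opsub_cong opmult_cong)

lemma opmult_add_left: "opmult C (opadd M N) K = opadd (opmult C M K) (opmult C N K)"
  unfolding opmult_def opadd_def by (auto simp: distrib_right sum.distrib intro!: ext)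

lemma opmult_add_right: "opmult C K (opadd M N) = opadd (opmult C K M) (opmult C K N)"
  unfolding opmult_def opadd_def by (auto simp: distrib_left sum.distrib intro!: ext)

lemma opmult_sub_left: "opmult C (opsub M N) K = opsub (opmult C M K) (opmult C N K)"
  unfolding opmult_def opsub_def by (auto simp: left_diff_distrib sum_subtractf intro!: ext)

lemma opmult_sub_right: "opmult C K (opsub M N) = opsub (opmult C K M) (opmult C K N)"
  unfolding opmult_def opsub_def by (auto simp: right_diff_distrib sum_subtractf intro!: ext)

lemma opmult_scale_left: "opmult C (opscale c M) K = opscale c (opmult C M K)"
  unfolding opmult_def opscale_def by (auto simp: sum_distrib_left mult.assoc intro!: ext)

lemma opmult_scale_right: "opmult C K (opscale c M) = opscale c (opmult C K M)"
  unfolding opmult_def opscale_def by (auto simp: sum_distrib_left mult.left_commute intro!: ext)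

lemma opmult_sum_left: "opmult C (opsum I F) K = opsum I (\<lambda>i. opmult C (F i) K)"
  unfolding opmult_def opsum_def by (auto simp: sum_distrib_right intro!: ext) (rule sum.swap)

lemma opmult_sum_right: "opmult C K (opsum I F) = opsum I (\<lambda>i. opmult C K (F i))"
  unfolding opmult_def opsum_def by (auto simp: sum_distrib_left intro!: ext) (rule sum.swap)

lemma opcomm_leibniz:
  "opcomm C P (opmult C M N) = opadd (opmult C (opcomm C P M) N) (opmult C M (opcomm C P N))"
  unfolding opcomm_eq_opsub opmult_sub_left opmult_sub_right opmult_assoc
  by (auto simp: opadd_def opsub_def intro!: ext)

lemma opcomm_sum_left: "opcomm C (opsum I F) M = opsum I (\<lambda>i. opcomm C (F i) M)"
  unfolding opcomm_eq_opsub opmult_sum_left opmult_sum_right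
  by (auto simp: opsub_def opsum_def sum_subtractf intro!: ext)

lemma opcomm_sum_right: "opcomm C M (opsum I F) = opsum I (\<lambda>i. opcomm C M (F i))"
  unfolding opcomm_eq_opsub opmult_sum_left opmult_sum_right
  by (auto simp: opsub_def opsum_def sum_subtractf intro!: ext)

lemma opcomm_scale_left: "opcomm C (opscale c M) N = opscale c (opcomm C M N)"
  unfolding opcomm_eq_opsub opmult_scale_left opmult_scale_right
  by (auto simp: opsub_def opscale_def right_diff_distrib intro!: ext)

lemma opcomm_add_left: "opcomm C (opadd M N) K = opadd (opcomm C M K) (opcomm C N K)"
  unfolding opcomm_eq_opsub opmult_add_left opmult_add_right
  by (auto simp: opsub_def opadd_def intro!: ext)

lemma opcomm_swap: "opcomm C M N = opscale (-1) (opcomm C N M)"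
  by (auto simp: opcomm_def opscale_def intro!: ext)

lemma opcomm_self: "opcomm C M M \<sigma> \<tau> = 0"
  unfolding opcomm_def by simp

definition op_commute_on :: "conf set \<Rightarrow> op \<Rightarrow> op \<Rightarrow> bool" where
  "op_commute_on C P M \<longleftrightarrow> op_eq_on C (opmult C P M) (opmult C M P)"

lemma op_commute_on_iff: "op_commute_on C P M \<longleftrightarrow> (\<forall>\<sigma>\<in>C. \<forall>\<tau>\<in>C. opcomm C P M \<sigma> \<tau> = 0)"
  unfolding op_commute_on_def op_eq_on_def opcomm_def by auto

lemma op_commute_on_sym: "op_commute_on C P M \<Longrightarrow> op_commute_on C M P"
  unfolding op_commute_on_def op_eq_on_def by simp

lemma op_commute_on_refl: "op_commute_on C P P"
  unfolding op_commute_on_def by simp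

lemma op_commute_on_mult:
  assumes "op_commute_on C P M" "op_commute_on C P N"
  shows "op_commute_on C P (opmult C M N)"
proof -
  have "op_eq_on C (opmult C P (opmult C M N)) (opmult C (opmult C M P) N)"
    unfolding opmult_assoc[symmetric] using assms(1) unfolding op_commute_on_def
    by (rule opmult_cong) auto
  also have "opmult C (opmult C M P) N = opmult C M (opmult C P N)" by (rule opmult_assoc)
  also have "op_eq_on C \<dots> (opmult C M (opmult C N P))"
    using assms(2) unfolding op_commute_on_def by (rule opmult_cong[OF op_eq_on_refl])
  finally show ?thesis unfolding op_commute_on_def opmult_assoc .
qed

lemma op_commute_on_add: "op_commute_on C P M \<Longrightarrow> op_commute_on C P N \<Longrightarrow> op_commute_on C P (opadd M N)"
  unfolding op_commute_on_def opmult_add_left opmult_add_right by (rule opadd_cong)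

lemma op_commute_on_sub: "op_commute_on C P M \<Longrightarrow> op_commute_on C P N \<Longrightarrow> op_commute_on C P (opsub M N)"
  unfolding op_commute_on_def opmult_sub_left opmult_sub_right by (rule opsub_cong)

lemma op_commute_on_sum: "(\<And>i. i \<in> I \<Longrightarrow> op_commute_on C P (F i)) \<Longrightarrow> op_commute_on C P (opsum I F)"
  unfolding op_commute_on_def opmult_sum_left opmult_sum_right by (rule opsum_cong)

lemma op_commute_on_opcomm: "op_commute_on C P M \<Longrightarrow> op_commute_on C P N \<Longrightarrow> op_commute_on C P (opcomm C M N)"
  unfolding opcomm_eq_opsub by (intro op_commute_on_sub op_commute_on_mult)

subsection \<open>Spin matrices\<close>

definition ladder_coeff :: "nat \<Rightarrow> nat \<Rightarrow> real" where
  "ladder_coeff n l = sqrt (real ((n - l) * (l + 1)))"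

lemma ladder_coeff_sq: "(ladder_coeff n l)\<^sup>2 = real ((n - l) * (l + 1))"
  unfolding ladder_coeff_def by simp

lemma ladder_coeff_nonneg: "0 \<le> ladder_coeff n l"
  unfolding ladder_coeff_def by simp

lemma ladder_coeff_le: "ladder_coeff n l \<le> real n + 1"
proof -
  have "(n - l) * (l + 1) \<le> (n + 1) * (n + 1)"
  proof (cases "l \<le> n")
    case True
    then show ?thesis by (intro mult_le_mono) auto
  qed simp
  then have "real ((n - l) * (l + 1)) \<le> real ((n + 1) * (n + 1))"
    by (simp only: of_nat_le_iff)
  also have "\<dots> = (real n + 1)\<^sup>2"
    by (simp add: power2_eq_square algebra_simps)
  finally have "ladder_coeff n l \<le> sqrt ((real n + 1)\<^sup>2)"
    unfolding ladder_coeff_def by (rule real_sqrt_le_mono)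
  then show ?thesis by simp
qed

lemma Splus_eq: "l \<le> n \<Longrightarrow> Splus n k l = (if k = Suc l then complex_of_real (ladder_coeff n l) else 0)"
  unfolding Splus_def ladder_coeff_def spinS_def mval_def
  by (simp add: of_nat_diff field_simps power2_eq_square)

lemma Sminus_eq: "k \<le> n \<Longrightarrow> Sminus n k l = (if l = Suc k then complex_of_real (ladder_coeff n k) else 0)"
  unfolding Sminus_def by (simp add: Splus_eq)

lemma Splus_Sminus:
  assumes "k \<le> n" "l \<le> n"
  shows "(\<Sum>j\<le>n. Splus n k j * Sminus n j l) = (if k = l \<and> 1 \<le> k then of_nat ((n - (k - 1)) * k) else 0)"
proof -
  have "(\<Sum>j\<le>n. Splus n k j * Sminus n j l)
      = (\<Sum>j\<le>n. if j = k - 1 then (if 1 \<le> k \<and> k = l then of_real ((ladder_coeff n j)\<^sup>2) else 0) else 0)"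
    by (rule sum.cong) (auto simp: Splus_eq Sminus_eq power2_eq_square)
  then show ?thesis using assms by (auto simp: ladder_coeff_sq)
qed

lemma Sminus_Splus:
  assumes "k \<le> n" "l \<le> n"
  shows "(\<Sum>j\<le>n. Sminus n k j * Splus n j l) = (if k = l then of_nat ((n - k) * (k + 1)) else 0)"
proof -
  have "(\<Sum>j\<le>n. Sminus n k j * Splus n j l)
      = (\<Sum>j\<le>n. if j = Suc k then (if k = l then of_real ((ladder_coeff n k)\<^sup>2) else 0) else 0)"
    by (rule sum.cong) (use assms in \<open>auto simp: Splus_eq Sminus_eq power2_eq_square\<close>)
  then show ?thesis using assms by (cases "k = n") (auto simp: ladder_coeff_sq)
qed

lemma spin3_right: "l \<le> n \<Longrightarrow> (\<Sum>j\<le>n. A j * spin n 3 j l) = A l * complex_of_real (mval n l)"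
  by (simp add: spin_def if_distrib[where f="\<lambda>z. A _ * z"] sum.delta cong: if_cong)

lemma spin3_left: "k \<le> n \<Longrightarrow> (\<Sum>j\<le>n. spin n 3 k j * A j) = complex_of_real (mval n k) * A k"
  by (simp add: spin_def if_distrib[where f="\<lambda>z. z * A _"] sum.delta cong: if_cong)

lemma spin_comm_12:
  assumes "k \<le> n" "l \<le> n"
  shows "(\<Sum>j\<le>n. spin n 1 k j * spin n 2 j l - spin n 2 k j * spin n 1 j l) = \<i> * spin n 3 k l"
proof -
  have "(\<Sum>j\<le>n. spin n 1 k j * spin n 2 j l - spin n 2 k j * spin n 1 j l)
      = (\<Sum>j\<le>n. (Sminus n k j * Splus n j l - Splus n k j * Sminus n j l) / (2 * \<i>))"
    by (rule sum.cong) (auto simp: spin_def field_simps)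
  also have "\<dots> = ((\<Sum>j\<le>n. Sminus n k j * Splus n j l) - (\<Sum>j\<le>n. Splus n k j * Sminus n j l)) / (2 * \<i>)"
    by (simp only: sum_subtractf[symmetric] sum_divide_distrib)
  also have "\<dots> = \<i> * spin n 3 k l"
    unfolding Splus_Sminus[OF assms] Sminus_Splus[OF assms] using assms
    by (auto simp: spin_def mval_def field_simps of_nat_diff not_less_eq_eq)
  finally show ?thesis .
qed

lemma spin_comm_13:
  assumes "k \<le> n" "l \<le> n"
  shows "(\<Sum>j\<le>n. spin n 1 k j * spin n 3 j l - spin n 3 k j * spin n 1 j l) = - \<i> * spin n 2 k l"
  unfolding sum_subtractf spin3_left[OF assms(1)] spin3_right[OF assms(2)]
  using assms by (auto simp: spin_def Splus_eq Sminus_eq mval_def field_simps)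

lemma spin_norm_le: "k \<le> n \<Longrightarrow> l \<le> n \<Longrightarrow> cmod (spin n a k l) \<le> real n + 1"
proof -
  assume "k \<le> n" "l \<le> n"
  then have P: "cmod (Splus n k l) \<le> real n + 1" and M: "cmod (Sminus n k l) \<le> real n + 1"
    and Z: "\<bar>mval n k\<bar> \<le> real n + 1"
    using ladder_coeff_le ladder_coeff_nonneg by (auto simp: Splus_eq Sminus_eq mval_def)
  have "cmod (Splus n k l + Sminus n k l) \<le> 2 * (real n + 1)"
    using norm_triangle_ineq[of "Splus n k l" "Sminus n k l"] P M by simp
  moreover have "cmod (Splus n k l - Sminus n k l) \<le> 2 * (real n + 1)"
    using norm_triangle_ineq4[of "Splus n k l" "Sminus n k l"] P M by simp
  ultimately show ?thesis using Z by (auto simp: spin_def norm_divide norm_mult)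
qed

subsection \<open>Single-site spin operators\<close>

definition agree_off :: "site \<Rightarrow> conf \<Rightarrow> conf \<Rightarrow> bool" where
  "agree_off x \<sigma> \<tau> \<longleftrightarrow> (\<forall>z. z \<noteq> x \<longrightarrow> \<sigma> z = \<tau> z)"

lemma Sop_eq: "Sop n x a = (\<lambda>\<sigma> \<tau>. if agree_off x \<sigma> \<tau> then spin n a (\<sigma> x) (\<tau> x) else 0)"
  unfolding Sop_def agree_off_def by simp

lemma agree_off_sym: "agree_off x \<sigma> \<tau> = agree_off x \<tau> \<sigma>"
  unfolding agree_off_def by auto

lemma agree_off_upd: "agree_off x (\<sigma>(x := j)) \<tau> = agree_off x \<sigma> \<tau>"
  unfolding agree_off_def by auto

lemma sum_confs_agree_off:
  assumes \<sigma>: "\<sigma> \<in> confs d n L" and x: "x \<in> Lambda d L"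
  shows "(\<Sum>\<rho>\<in>confs d n L. if agree_off x \<sigma> \<rho> then g \<rho> else 0) = (\<Sum>j\<le>n. g (\<sigma>(x := j)))"
proof -
  have "{\<rho>\<in>confs d n L. agree_off x \<sigma> \<rho>} = (\<lambda>j. \<sigma>(x := j)) ` {..n}"
  proof
    show "{\<rho> \<in> confs d n L. agree_off x \<sigma> \<rho>} \<subseteq> (\<lambda>j. \<sigma>(x := j)) ` {..n}"
    proof
      fix \<rho> assume \<rho>: "\<rho> \<in> {\<rho> \<in> confs d n L. agree_off x \<sigma> \<rho>}"
      then have "\<rho> = \<sigma>(x := \<rho> x)" unfolding agree_off_def by auto
      moreover have "\<rho> x \<le> n" using \<rho> x confs_le by auto
      ultimately show "\<rho> \<in> (\<lambda>j. \<sigma>(x := j)) ` {..n}" by auto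
    qed
    show "(\<lambda>j. \<sigma>(x := j)) ` {..n} \<subseteq> {\<rho> \<in> confs d n L. agree_off x \<sigma> \<rho>}"
      using confs_upd[OF \<sigma> x] by (auto simp: agree_off_def)
  qed
  moreover have "inj_on (\<lambda>j. \<sigma>(x := j)) {..n}"
    by (auto simp: inj_on_def dest: fun_cong[where x=x])
  ultimately show ?thesis
    by (simp add: sum.inter_filter[symmetric] finite_confs sum.reindex)
qed

lemma Sop_mult_same_site:
  assumes \<sigma>: "\<sigma> \<in> confs d n L" and x: "x \<in> Lambda d L"
  shows "opmult (confs d n L) (Sop n x a) (Sop n x b) \<sigma> \<tau>
    = (if agree_off x \<sigma> \<tau> then (\<Sum>j\<le>n. spin n a (\<sigma> x) j * spin n b j (\<tau> x)) else 0)"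
proof -
  have "opmult (confs d n L) (Sop n x a) (Sop n x b) \<sigma> \<tau>
     = (\<Sum>\<rho>\<in>confs d n L. if agree_off x \<sigma> \<rho> then spin n a (\<sigma> x) (\<rho> x) * Sop n x b \<rho> \<tau> else 0)"
    unfolding opmult_def Sop_eq by (rule sum.cong) auto
  also have "\<dots> = (\<Sum>j\<le>n. spin n a (\<sigma> x) j * Sop n x b (\<sigma>(x := j)) \<tau>)"
    by (subst sum_confs_agree_off[OF \<sigma> x]) simp
  also have "\<dots> = (if agree_off x \<sigma> \<tau> then (\<Sum>j\<le>n. spin n a (\<sigma> x) j * spin n b j (\<tau> x)) else 0)"
    unfolding Sop_eq agree_off_upd by auto
  finally show ?thesis .
qed

lemma Sop_comm_same_site:
  assumes x: "x \<in> Lambda d L"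
    and spin_comm: "\<And>k l. k \<le> n \<Longrightarrow> l \<le> n \<Longrightarrow>
      (\<Sum>j\<le>n. spin n a k j * spin n b j l - spin n b k j * spin n a j l) = c * spin n e k l"
  shows "op_eq_on (confs d n L) (opcomm (confs d n L) (Sop n x a) (Sop n x b)) (opscale c (Sop n x e))"
  unfolding op_eq_on_def
proof (intro ballI)
  fix \<sigma> \<tau> assume \<sigma>: "\<sigma> \<in> confs d n L" and \<tau>: "\<tau> \<in> confs d n L"
  have "opcomm (confs d n L) (Sop n x a) (Sop n x b) \<sigma> \<tau> = (if agree_off x \<sigma> \<tau> then
      (\<Sum>j\<le>n. spin n a (\<sigma> x) j * spin n b j (\<tau> x) - spin n b (\<sigma> x) j * spin n a j (\<tau> x)) else 0)"
    unfolding opcomm_def Sop_mult_same_site[OF \<sigma> x] by (simp add: sum_subtractf)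
  then show "opcomm (confs d n L) (Sop n x a) (Sop n x b) \<sigma> \<tau> = opscale c (Sop n x e) \<sigma> \<tau>"
    using x \<sigma> \<tau> by (simp add: spin_comm confs_le Sop_eq opscale_def)
qed

lemma Sop_comm_12:
  "x \<in> Lambda d L \<Longrightarrow> op_eq_on (confs d n L) (opcomm (confs d n L) (Sop n x 1) (Sop n x 2)) (opscale \<i> (Sop n x 3))"
  by (rule Sop_comm_same_site[OF _ spin_comm_12])

lemma Sop_comm_13:
  "x \<in> Lambda d L \<Longrightarrow> op_eq_on (confs d n L) (opcomm (confs d n L) (Sop n x 1) (Sop n x 3)) (opscale (- \<i>) (Sop n x 2))"
  by (rule Sop_comm_same_site[OF _ spin_comm_13])

lemma Sop_mult_distinct_sites:
  assumes zw: "z \<noteq> w" and \<sigma>: "\<sigma> \<in> confs d n L" and \<tau>: "\<tau> \<in> confs d n L"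
  shows "opmult (confs d n L) (Sop n z a) (Sop n w b) \<sigma> \<tau>
     = (if \<forall>u. u \<noteq> z \<longrightarrow> u \<noteq> w \<longrightarrow> \<sigma> u = \<tau> u
        then spin n a (\<sigma> z) (\<tau> z) * spin n b (\<sigma> w) (\<tau> w) else 0)"
proof -
  let ?\<rho> = "\<sigma>(z := \<tau> z)"
  have \<rho>: "?\<rho> \<in> confs d n L" using \<sigma> \<tau> unfolding confs_def by auto
  have "opmult (confs d n L) (Sop n z a) (Sop n w b) \<sigma> \<tau>
      = (\<Sum>\<rho>\<in>{?\<rho>}. Sop n z a \<sigma> \<rho> * Sop n w b \<rho> \<tau>)"
    unfolding opmult_def
  proof (rule sum.mono_neutral_right[OF finite_confs])
    show "{?\<rho>} \<subseteq> confs d n L" using \<rho> by simp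
    show "\<forall>\<rho>\<in>confs d n L - {?\<rho>}. Sop n z a \<sigma> \<rho> * Sop n w b \<rho> \<tau> = 0"
    proof
      fix \<rho> assume "\<rho> \<in> confs d n L - {?\<rho>}"
      then have "\<rho> \<noteq> ?\<rho>" by blast
      then obtain u where u: "\<rho> u \<noteq> ?\<rho> u" by (meson ext)
      show "Sop n z a \<sigma> \<rho> * Sop n w b \<rho> \<tau> = 0"
        using u zw unfolding Sop_def by (cases "u = z") auto
    qed
  qed
  also have "\<dots> = Sop n z a \<sigma> ?\<rho> * Sop n w b ?\<rho> \<tau>" by simp
  also have "\<dots> = (if \<forall>u. u \<noteq> z \<longrightarrow> u \<noteq> w \<longrightarrow> \<sigma> u = \<tau> u
        then spin n a (\<sigma> z) (\<tau> z) * spin n b (\<sigma> w) (\<tau> w) else 0)"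
    unfolding Sop_def using zw by auto
  finally show ?thesis .
qed

lemma Sop_commute_distinct_sites:
  "z \<noteq> w \<Longrightarrow> op_commute_on (confs d n L) (Sop n z a) (Sop n w b)"
  unfolding op_commute_on_def op_eq_on_def by (auto simp: Sop_mult_distinct_sites mult.commute)

subsection \<open>The double commutator with a transverse field\<close>

lemma sdot_eq_opsum: "sdot d n L x y = opsum {1, 2, 3} (\<lambda>a. opmult (confs d n L) (Sop n x a) (Sop n y a))"
  unfolding sdot_def opsum_def ..

lemma Sop_commute_sdot:
  "z \<noteq> x \<Longrightarrow> z \<noteq> y \<Longrightarrow> op_commute_on (confs d n L) (Sop n z a) (sdot d n L x y)"
  unfolding sdot_eq_opsum by (intro op_commute_on_sum op_commute_on_mult Sop_commute_distinct_sites) auto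

text \<open>Rotation invariance of S_x\<cdot>S_y about the first axis: by the Leibniz rule, the
  su(2) relations on each site and the commutation of different sites,
  [S_x^(1) + S_y^(1), S_x^(a) S_y^(a)] vanishes for a = 1 and the terms for
  a = 2 and a = 3 cancel.\<close>

lemma total_Sop1_commute_sdot:
  assumes xy: "x \<noteq> y" and x: "x \<in> Lambda d L" and y: "y \<in> Lambda d L"
  shows "op_commute_on (confs d n L) (opadd (Sop n x 1) (Sop n y 1)) (sdot d n L x y)"
  unfolding op_commute_on_iff
proof (intro ballI)
  let ?C = "confs d n L"
  fix \<sigma> \<tau> assume \<sigma>: "\<sigma> \<in> ?C" and \<tau>: "\<tau> \<in> ?C"
  have cross_x: "opmult ?C M (opcomm ?C (Sop n x 1) (Sop n y a)) \<sigma> \<tau> = 0" for M a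
    using \<tau> Sop_commute_distinct_sites[OF xy] unfolding opmult_def op_commute_on_iff by simp
  have cross_y: "opmult ?C (opcomm ?C (Sop n y 1) (Sop n x a)) M \<sigma> \<tau> = 0" for M a
    using \<sigma> Sop_commute_distinct_sites[OF xy[symmetric]] unfolding opmult_def op_commute_on_iff by simp
  have x12: "opmult ?C (opcomm ?C (Sop n x 1) (Sop n x 2)) M \<sigma> \<tau> = \<i> * opmult ?C (Sop n x 3) M \<sigma> \<tau>"
    for M by (subst opmult_eq_on_left[OF Sop_comm_12[OF x] \<sigma>]) (simp only: opmult_scale_left, simp add: opscale_def)
  have x13: "opmult ?C (opcomm ?C (Sop n x 1) (Sop n x 3)) M \<sigma> \<tau> = - \<i> * opmult ?C (Sop n x 2) M \<sigma> \<tau>"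
    for M by (subst opmult_eq_on_left[OF Sop_comm_13[OF x] \<sigma>]) (simp only: opmult_scale_left, simp add: opscale_def)
  have y12: "opmult ?C M (opcomm ?C (Sop n y 1) (Sop n y 2)) \<sigma> \<tau> = \<i> * opmult ?C M (Sop n y 3) \<sigma> \<tau>"
    for M by (subst opmult_eq_on_right[OF Sop_comm_12[OF y] \<tau>]) (simp only: opmult_scale_right, simp add: opscale_def)
  have y13: "opmult ?C M (opcomm ?C (Sop n y 1) (Sop n y 3)) \<sigma> \<tau> = - \<i> * opmult ?C M (Sop n y 2) \<sigma> \<tau>"
    for M by (subst opmult_eq_on_right[OF Sop_comm_13[OF y] \<tau>]) (simp only: opmult_scale_right, simp add: opscale_def)
  have self: "opmult ?C (opcomm ?C P P) M \<sigma> \<tau> = 0" "opmult ?C M (opcomm ?C P P) \<sigma> \<tau> = 0" for P M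
    by (simp_all add: opmult_def opcomm_self)
  show "opcomm ?C (opadd (Sop n x 1) (Sop n y 1)) (sdot d n L x y) \<sigma> \<tau> = 0"
    unfolding sdot_eq_opsum opcomm_add_left opcomm_sum_right opcomm_leibniz opmult_add_left opmult_add_right
    by (simp add: opadd_def opsum_def cross_x cross_y x12 x13 y12 y13 self del: One_nat_def)
qed

definition transverse_field :: "nat \<Rightarrow> nat \<Rightarrow> nat \<Rightarrow> (site \<Rightarrow> complex) \<Rightarrow> op" where
  "transverse_field d n L h = opsum (Lambda d L) (\<lambda>z. opscale (h z) (Sop n z 1))"

lemma sum_eq_two_terms:
  assumes "finite A" "x \<noteq> y" "x \<in> A" "y \<in> A" "\<And>z. z \<in> A \<Longrightarrow> z \<noteq> x \<Longrightarrow> z \<noteq> y \<Longrightarrow> g z = 0"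
  shows "sum g A = g x + g y"
proof -
  have "sum g A = sum g {x, y}"
    by (rule sum.mono_neutral_right) (use assms in auto)
  then show ?thesis using assms by simp
qed

lemma opcomm_transverse_field:
  assumes xy: "x \<noteq> y" and x: "x \<in> Lambda d L" and y: "y \<in> Lambda d L"
    and away: "\<And>z. z \<noteq> x \<Longrightarrow> z \<noteq> y \<Longrightarrow> op_commute_on (confs d n L) (Sop n z 1) M"
    and total: "op_commute_on (confs d n L) (opadd (Sop n x 1) (Sop n y 1)) M"
  shows "op_eq_on (confs d n L) (opcomm (confs d n L) (transverse_field d n L h) M)
           (opscale (h x - h y) (opcomm (confs d n L) (Sop n x 1) M))"
  unfolding op_eq_on_def
proof (intro ballI)
  let ?C = "confs d n L"
  fix \<sigma> \<tau> assume \<sigma>: "\<sigma> \<in> ?C" and \<tau>: "\<tau> \<in> ?C"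
  have "opcomm ?C (transverse_field d n L h) M \<sigma> \<tau> = (\<Sum>z\<in>Lambda d L. h z * opcomm ?C (Sop n z 1) M \<sigma> \<tau>)"
    unfolding transverse_field_def opcomm_sum_left opcomm_scale_left by (simp add: opsum_def opscale_def)
  also have "\<dots> = h x * opcomm ?C (Sop n x 1) M \<sigma> \<tau> + h y * opcomm ?C (Sop n y 1) M \<sigma> \<tau>"
    using away \<sigma> \<tau> by (intro sum_eq_two_terms[OF finite_Lambda xy x y]) (simp add: op_commute_on_iff)
  also have "opcomm ?C (Sop n y 1) M \<sigma> \<tau> = - opcomm ?C (Sop n x 1) M \<sigma> \<tau>"
    using total \<sigma> \<tau> unfolding op_commute_on_iff opcomm_add_left by (simp add: opadd_def add_eq_0_iff)
  finally show "opcomm ?C (transverse_field d n L h) M \<sigma> \<tau> = opscale (h x - h y) (opcomm ?C (Sop n x 1) M) \<sigma> \<tau>"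
    by (simp add: opscale_def algebra_simps)
qed

lemma double_commutator_transverse_field:
  fixes n d L :: nat and h :: "site \<Rightarrow> complex"
  assumes xy: "x \<noteq> y" and x: "x \<in> Lambda d L" and y: "y \<in> Lambda d L"
  defines "H \<equiv> transverse_field d n L h" and "A \<equiv> sdot d n L x y"
  shows "op_eq_on (confs d n L) (opcomm (confs d n L) (opcomm (confs d n L) H A) H)
           (opscale ((h x - h y)\<^sup>2)
             (opcomm (confs d n L) (opcomm (confs d n L) (Sop n x 1) A) (Sop n x 1)))"
    (is "op_eq_on ?C _ _")
proof -
  let ?D = "opcomm ?C (Sop n x 1) A"
  have total: "op_commute_on ?C (opadd (Sop n x 1) (Sop n y 1)) A"
    unfolding A_def by (rule total_Sop1_commute_sdot[OF xy x y])
  have HA: "op_eq_on ?C (opcomm ?C H A) (opscale (h x - h y) ?D)"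
    unfolding H_def A_def
    by (rule opcomm_transverse_field[OF xy x y Sop_commute_sdot total[unfolded A_def]])
  have total_x: "op_commute_on ?C (opadd (Sop n x 1) (Sop n y 1)) (Sop n x 1)"
    by (rule op_commute_on_sym, intro op_commute_on_add op_commute_on_refl Sop_commute_distinct_sites)
      (use xy in simp)
  have HD: "op_eq_on ?C (opcomm ?C H ?D) (opscale (h x - h y) (opcomm ?C (Sop n x 1) ?D))"
    unfolding H_def
  proof (rule opcomm_transverse_field[OF xy x y])
    show "op_commute_on ?C (Sop n z 1) ?D" if "z \<noteq> x" "z \<noteq> y" for z
      using that unfolding A_def
      by (intro op_commute_on_opcomm Sop_commute_distinct_sites Sop_commute_sdot)
    show "op_commute_on ?C (opadd (Sop n x 1) (Sop n y 1)) ?D"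
      using total_x total by (rule op_commute_on_opcomm)
  qed
  have "op_eq_on ?C (opcomm ?C (opcomm ?C H A) H) (opcomm ?C (opscale (h x - h y) ?D) H)"
    by (rule opcomm_cong[OF HA op_eq_on_refl])
  also have "opcomm ?C (opscale (h x - h y) ?D) H = opscale (- (h x - h y)) (opcomm ?C H ?D)"
    unfolding opcomm_scale_left opcomm_swap[of ?C ?D H] by (simp add: opscale_def algebra_simps)
  also have "op_eq_on ?C \<dots> (opscale (- (h x - h y)) (opscale (h x - h y) (opcomm ?C (Sop n x 1) ?D)))"
    by (rule opscale_cong[OF HD])
  also have "\<dots> = opscale ((h x - h y)\<^sup>2) (opcomm ?C ?D (Sop n x 1))"
    unfolding opcomm_swap[of ?C ?D "Sop n x 1"] by (simp add: opscale_def power2_eq_square algebra_simps)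
  finally show ?thesis .
qed

subsection \<open>Schur test\<close>

definition row_sum_le :: "conf set \<Rightarrow> op \<Rightarrow> real \<Rightarrow> bool" where
  "row_sum_le C M r \<longleftrightarrow> (\<forall>\<sigma>\<in>C. (\<Sum>\<tau>\<in>C. cmod (M \<sigma> \<tau>)) \<le> r)"

definition optrans :: "op \<Rightarrow> op" where
  "optrans M = (\<lambda>\<sigma> \<tau>. M \<tau> \<sigma>)"

definition schur_bounded :: "conf set \<Rightarrow> op \<Rightarrow> real \<Rightarrow> bool" where
  "schur_bounded C M r \<longleftrightarrow> row_sum_le C M r \<and> row_sum_le C (optrans M) r"

lemma optrans_opmult: "optrans (opmult C M N) = opmult C (optrans N) (optrans M)"
  unfolding optrans_def opmult_def by (simp add: mult.commute)

lemma row_sum_le_opmult: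
  assumes M: "row_sum_le C M r1" and N: "row_sum_le C N r2" and "0 \<le> r2"
  shows "row_sum_le C (opmult C M N) (r1 * r2)"
  unfolding row_sum_le_def
proof
  fix \<sigma> assume \<sigma>: "\<sigma> \<in> C"
  have "(\<Sum>\<tau>\<in>C. cmod (opmult C M N \<sigma> \<tau>)) \<le> (\<Sum>\<tau>\<in>C. \<Sum>\<rho>\<in>C. cmod (M \<sigma> \<rho>) * cmod (N \<rho> \<tau>))"
    unfolding opmult_def by (intro sum_mono order_trans[OF norm_sum]) (simp add: norm_mult)
  also have "\<dots> = (\<Sum>\<rho>\<in>C. cmod (M \<sigma> \<rho>) * (\<Sum>\<tau>\<in>C. cmod (N \<rho> \<tau>)))"
    by (subst sum.swap) (simp add: sum_distrib_left)
  also have "\<dots> \<le> (\<Sum>\<rho>\<in>C. cmod (M \<sigma> \<rho>) * r2)"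
    using N unfolding row_sum_le_def by (intro sum_mono mult_left_mono) auto
  also have "\<dots> \<le> r1 * r2"
    using M \<sigma> \<open>0 \<le> r2\<close> unfolding row_sum_le_def by (simp add: sum_distrib_right[symmetric] mult_right_mono)
  finally show "(\<Sum>\<tau>\<in>C. cmod (opmult C M N \<sigma> \<tau>)) \<le> r1 * r2" .
qed

lemma row_sum_le_opsub:
  assumes M: "row_sum_le C M r1" and N: "row_sum_le C N r2"
  shows "row_sum_le C (opsub M N) (r1 + r2)"
  unfolding row_sum_le_def
proof
  fix \<sigma> assume \<sigma>: "\<sigma> \<in> C"
  have "(\<Sum>\<tau>\<in>C. cmod (opsub M N \<sigma> \<tau>)) \<le> (\<Sum>\<tau>\<in>C. cmod (M \<sigma> \<tau>) + cmod (N \<sigma> \<tau>))"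
    unfolding opsub_def by (intro sum_mono norm_triangle_ineq4)
  also have "\<dots> \<le> r1 + r2"
    using M N \<sigma> unfolding row_sum_le_def by (simp add: sum.distrib add_mono)
  finally show "(\<Sum>\<tau>\<in>C. cmod (opsub M N \<sigma> \<tau>)) \<le> r1 + r2" .
qed

lemma row_sum_le_opsum:
  fixes r :: real
  assumes "\<And>i. i \<in> I \<Longrightarrow> row_sum_le C (F i) r"
  shows "row_sum_le C (opsum I F) (card I * r)"
  unfolding row_sum_le_def
proof
  fix \<sigma> assume \<sigma>: "\<sigma> \<in> C"
  have "(\<Sum>\<tau>\<in>C. cmod (opsum I F \<sigma> \<tau>)) \<le> (\<Sum>\<tau>\<in>C. \<Sum>i\<in>I. cmod (F i \<sigma> \<tau>))"
    unfolding opsum_def by (intro sum_mono norm_sum)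
  also have "\<dots> = (\<Sum>i\<in>I. \<Sum>\<tau>\<in>C. cmod (F i \<sigma> \<tau>))" by (rule sum.swap)
  also have "\<dots> \<le> (\<Sum>i\<in>I. r)" using assms \<sigma> unfolding row_sum_le_def by (intro sum_mono) auto
  finally show "(\<Sum>\<tau>\<in>C. cmod (opsum I F \<sigma> \<tau>)) \<le> real (card I) * r" by simp
qed

lemma schur_bounded_opmult:
  "schur_bounded C M r1 \<Longrightarrow> schur_bounded C N r2 \<Longrightarrow> 0 \<le> r1 \<Longrightarrow> 0 \<le> r2 \<Longrightarrow>
    schur_bounded C (opmult C M N) (r1 * r2)"
  unfolding schur_bounded_def optrans_opmult
  by (metis mult.commute row_sum_le_opmult)

lemma schur_bounded_opsub:
  "schur_bounded C M r1 \<Longrightarrow> schur_bounded C N r2 \<Longrightarrow> schur_bounded C (opsub M N) (r1 + r2)"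
proof -
  have "optrans (opsub M N) = opsub (optrans M) (optrans N)"
    by (simp add: optrans_def opsub_def)
  then show "schur_bounded C M r1 \<Longrightarrow> schur_bounded C N r2 \<Longrightarrow> schur_bounded C (opsub M N) (r1 + r2)"
    unfolding schur_bounded_def by (simp add: row_sum_le_opsub)
qed

lemma schur_bounded_opcomm:
  assumes "schur_bounded C M r1" "schur_bounded C N r2" "0 \<le> r1" "0 \<le> r2"
  shows "schur_bounded C (opcomm C M N) (2 * (r1 * r2))"
proof -
  have "schur_bounded C (opsub (opmult C M N) (opmult C N M)) (r1 * r2 + r2 * r1)"
    using assms by (intro schur_bounded_opsub schur_bounded_opmult)
  moreover have "r1 * r2 + r2 * r1 = 2 * (r1 * r2)" by simp
  ultimately show ?thesis unfolding opcomm_eq_opsub by simp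
qed

lemma schur_bounded_opsum:
  fixes r :: real
  assumes "\<And>i. i \<in> I \<Longrightarrow> schur_bounded C (F i) r"
  shows "schur_bounded C (opsum I F) (card I * r)"
proof -
  have "optrans (opsum I F) = opsum I (\<lambda>i. optrans (F i))"
    by (simp add: optrans_def opsum_def)
  then show ?thesis
    using assms unfolding schur_bounded_def by (simp add: row_sum_le_opsum)
qed

lemma schur_bounded_opscale: "schur_bounded C M r \<Longrightarrow> schur_bounded C (opscale c M) (cmod c * r)"
  unfolding schur_bounded_def row_sum_le_def optrans_def opscale_def
  by (simp add: norm_mult sum_distrib_left[symmetric] mult_left_mono)

lemma opnorm_cong:
  assumes "op_eq_on C M N"
  shows "opnorm C M = opnorm C N"
proof -
  have "(\<Sum>\<sigma>\<in>C. (cmod (\<Sum>\<tau>\<in>C. M \<sigma> \<tau> * v \<tau>))\<^sup>2) = (\<Sum>\<sigma>\<in>C. (cmod (\<Sum>\<tau>\<in>C. N \<sigma> \<tau> * v \<tau>))\<^sup>2)" for v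
    using assms unfolding op_eq_on_def by (intro sum.cong refl arg_cong[where f="\<lambda>z. (cmod z)\<^sup>2"]) auto
  then show ?thesis unfolding opnorm_def by simp
qed

text \<open>Cauchy-Schwarz for the factorization a v = sqrt |a| * (sqrt |a| v).\<close>

lemma cmod_sum_mult_sq_le:
  fixes a v :: "'a \<Rightarrow> complex"
  shows "(cmod (\<Sum>\<tau>\<in>C. a \<tau> * v \<tau>))\<^sup>2 \<le> (\<Sum>\<tau>\<in>C. cmod (a \<tau>)) * (\<Sum>\<tau>\<in>C. cmod (a \<tau>) * (cmod (v \<tau>))\<^sup>2)"
proof -
  have "cmod (\<Sum>\<tau>\<in>C. a \<tau> * v \<tau>) \<le> (\<Sum>\<tau>\<in>C. sqrt (cmod (a \<tau>)) * (sqrt (cmod (a \<tau>)) * cmod (v \<tau>)))"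
    by (rule order_trans[OF norm_sum]) (simp add: norm_mult mult.assoc[symmetric])
  then have "(cmod (\<Sum>\<tau>\<in>C. a \<tau> * v \<tau>))\<^sup>2
      \<le> (\<Sum>\<tau>\<in>C. sqrt (cmod (a \<tau>)) * (sqrt (cmod (a \<tau>)) * cmod (v \<tau>)))\<^sup>2"
    by (intro power_mono) auto
  also have "\<dots> \<le> (\<Sum>\<tau>\<in>C. (sqrt (cmod (a \<tau>)))\<^sup>2) * (\<Sum>\<tau>\<in>C. (sqrt (cmod (a \<tau>)) * cmod (v \<tau>))\<^sup>2)"
    by (rule Cauchy_Schwarz_ineq_sum)
  also have "\<dots> = (\<Sum>\<tau>\<in>C. cmod (a \<tau>)) * (\<Sum>\<tau>\<in>C. cmod (a \<tau>) * (cmod (v \<tau>))\<^sup>2)"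
    by (simp add: power_mult_distrib)
  finally show ?thesis .
qed

lemma opnorm_le_schur:
  assumes b: "schur_bounded C M r" and r: "0 \<le> r"
  shows "opnorm C M \<le> r"
  unfolding opnorm_def
proof (rule cSup_least)
  show "{sqrt (\<Sum>\<sigma>\<in>C. (cmod (\<Sum>\<tau>\<in>C. M \<sigma> \<tau> * v \<tau>))\<^sup>2) |v. (\<Sum>\<sigma>\<in>C. (cmod (v \<sigma>))\<^sup>2) \<le> 1} \<noteq> {}"
  proof -
    have "sqrt (\<Sum>\<sigma>\<in>C. (cmod (\<Sum>\<tau>\<in>C. M \<sigma> \<tau> * 0))\<^sup>2)
        \<in> {sqrt (\<Sum>\<sigma>\<in>C. (cmod (\<Sum>\<tau>\<in>C. M \<sigma> \<tau> * v \<tau>))\<^sup>2) |v. (\<Sum>\<sigma>\<in>C. (cmod (v \<sigma>))\<^sup>2) \<le> 1}"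
      by (rule CollectI, rule exI[of _ "\<lambda>_. 0"]) simp
    then show ?thesis by blast
  qed
next
  fix u assume "u \<in> {sqrt (\<Sum>\<sigma>\<in>C. (cmod (\<Sum>\<tau>\<in>C. M \<sigma> \<tau> * v \<tau>))\<^sup>2) |v. (\<Sum>\<sigma>\<in>C. (cmod (v \<sigma>))\<^sup>2) \<le> 1}"
  then obtain v where u: "u = sqrt (\<Sum>\<sigma>\<in>C. (cmod (\<Sum>\<tau>\<in>C. M \<sigma> \<tau> * v \<tau>))\<^sup>2)"
    and v: "(\<Sum>\<sigma>\<in>C. (cmod (v \<sigma>))\<^sup>2) \<le> 1"
    by auto
  have row: "(cmod (\<Sum>\<tau>\<in>C. M \<sigma> \<tau> * v \<tau>))\<^sup>2 \<le> r * (\<Sum>\<tau>\<in>C. cmod (M \<sigma> \<tau>) * (cmod (v \<tau>))\<^sup>2)"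
    if "\<sigma> \<in> C" for \<sigma>
  proof -
    have "(\<Sum>\<tau>\<in>C. cmod (M \<sigma> \<tau>)) \<le> r"
      using b that unfolding schur_bounded_def row_sum_le_def by blast
    moreover have "0 \<le> (\<Sum>\<tau>\<in>C. cmod (M \<sigma> \<tau>) * (cmod (v \<tau>))\<^sup>2)" by (intro sum_nonneg) simp
    ultimately show ?thesis
      using cmod_sum_mult_sq_le[of "M \<sigma>" v C] by (meson mult_right_mono order_trans)
  qed
  have "(\<Sum>\<sigma>\<in>C. (cmod (\<Sum>\<tau>\<in>C. M \<sigma> \<tau> * v \<tau>))\<^sup>2) \<le> (\<Sum>\<sigma>\<in>C. r * (\<Sum>\<tau>\<in>C. cmod (M \<sigma> \<tau>) * (cmod (v \<tau>))\<^sup>2))"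
    by (rule sum_mono) (rule row)
  also have "\<dots> = r * (\<Sum>\<tau>\<in>C. (\<Sum>\<sigma>\<in>C. cmod (M \<sigma> \<tau>)) * (cmod (v \<tau>))\<^sup>2)"
    by (simp add: sum_distrib_left[symmetric] sum_distrib_right) (rule disjI2, rule sum.swap)
  also have "\<dots> \<le> r * (\<Sum>\<tau>\<in>C. r * (cmod (v \<tau>))\<^sup>2)"
    using b r unfolding schur_bounded_def row_sum_le_def optrans_def
    by (intro mult_left_mono sum_mono mult_right_mono) auto
  also have "\<dots> = r\<^sup>2 * (\<Sum>\<tau>\<in>C. (cmod (v \<tau>))\<^sup>2)"
    by (simp add: sum_distrib_left power2_eq_square mult.assoc)
  also have "\<dots> \<le> r\<^sup>2" using v by (simp add: mult_left_le)
  finally have "u \<le> sqrt (r\<^sup>2)" unfolding u by (rule real_sqrt_le_mono)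
  then show "u \<le> r" using r by simp
qed

lemma Sop_schur_bounded:
  assumes x: "x \<in> Lambda d L"
  shows "schur_bounded (confs d n L) (Sop n x a) ((real n + 1)\<^sup>2)"
  unfolding schur_bounded_def row_sum_le_def optrans_def
proof (intro conjI ballI)
  fix \<sigma> assume \<sigma>: "\<sigma> \<in> confs d n L"
  have "(\<Sum>\<tau>\<in>confs d n L. cmod (Sop n x a \<sigma> \<tau>))
      = (\<Sum>\<tau>\<in>confs d n L. if agree_off x \<sigma> \<tau> then cmod (spin n a (\<sigma> x) (\<tau> x)) else 0)"
    unfolding Sop_eq by (rule sum.cong) auto
  also have "\<dots> = (\<Sum>j\<le>n. cmod (spin n a (\<sigma> x) j))" by (subst sum_confs_agree_off[OF \<sigma> x]) simp
  also have "\<dots> \<le> (\<Sum>j\<le>n. real n + 1)" using confs_le[OF \<sigma> x] by (intro sum_mono spin_norm_le) auto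
  finally show "(\<Sum>\<tau>\<in>confs d n L. cmod (Sop n x a \<sigma> \<tau>)) \<le> (real n + 1)\<^sup>2"
    by (simp add: power2_eq_square algebra_simps)
next
  fix \<tau> assume \<tau>: "\<tau> \<in> confs d n L"
  have "(\<Sum>\<sigma>\<in>confs d n L. cmod (Sop n x a \<sigma> \<tau>))
      = (\<Sum>\<sigma>\<in>confs d n L. if agree_off x \<tau> \<sigma> then cmod (spin n a (\<sigma> x) (\<tau> x)) else 0)"
    unfolding Sop_eq by (rule sum.cong) (auto simp: agree_off_sym)
  also have "\<dots> = (\<Sum>j\<le>n. cmod (spin n a j (\<tau> x)))" by (subst sum_confs_agree_off[OF \<tau> x]) simp
  also have "\<dots> \<le> (\<Sum>j\<le>n. real n + 1)" using confs_le[OF \<tau> x] by (intro sum_mono spin_norm_le) auto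
  finally show "(\<Sum>\<sigma>\<in>confs d n L. cmod (Sop n x a \<sigma> \<tau>)) \<le> (real n + 1)\<^sup>2"
    by (simp add: power2_eq_square algebra_simps)
qed

definition spin_const :: "nat \<Rightarrow> real" where
  "spin_const n = 12 * (real n + 1) ^ 8"

lemma schur_bounded_spin_double_commutator:
  assumes x: "x \<in> Lambda d L" and y: "y \<in> Lambda d L"
  shows "schur_bounded (confs d n L)
    (opcomm (confs d n L) (opcomm (confs d n L) (Sop n x 1) (sdot d n L x y)) (Sop n x 1)) (spin_const n)"
proof -
  let ?C = "confs d n L" and ?s = "(real n + 1)\<^sup>2"
  have "schur_bounded ?C (sdot d n L x y) (3 * (?s * ?s))"
    using schur_bounded_opsum[of "{1, 2, 3}" ?C "\<lambda>a. opmult ?C (Sop n x a) (Sop n y a)" "?s * ?s"]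
      schur_bounded_opmult[OF Sop_schur_bounded[OF x] Sop_schur_bounded[OF y]]
    unfolding sdot_eq_opsum by simp
  then have "schur_bounded ?C (opcomm ?C (Sop n x 1) (sdot d n L x y)) (2 * (?s * (3 * (?s * ?s))))"
    by (rule schur_bounded_opcomm[OF Sop_schur_bounded[OF x]]) auto
  then have "schur_bounded ?C (opcomm ?C (opcomm ?C (Sop n x 1) (sdot d n L x y)) (Sop n x 1))
      (2 * (2 * (?s * (3 * (?s * ?s))) * ?s))"
    by (rule schur_bounded_opcomm[OF _ Sop_schur_bounded[OF x]]) auto
  moreover have "2 * (2 * (?s * (3 * (?s * ?s))) * ?s) = spin_const n"
    unfolding spin_const_def by (simp add: power_mult_distrib flip: power_add power_mult)
  ultimately show ?thesis by simp
qed

lemma opnorm_double_commutator_transverse_field: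
  fixes n d L :: nat and h :: "site \<Rightarrow> complex"
  assumes xy: "x \<noteq> y" and x: "x \<in> Lambda d L" and y: "y \<in> Lambda d L"
  defines "H \<equiv> transverse_field d n L h"
  shows "opnorm (confs d n L) (opcomm (confs d n L) (opcomm (confs d n L) H (sdot d n L x y)) H)
     \<le> (cmod (h x - h y))\<^sup>2 * spin_const n"
proof -
  have "schur_bounded (confs d n L) (opscale ((h x - h y)\<^sup>2)
      (opcomm (confs d n L) (opcomm (confs d n L) (Sop n x 1) (sdot d n L x y)) (Sop n x 1)))
      ((cmod (h x - h y))\<^sup>2 * spin_const n)"
    using schur_bounded_opscale[OF schur_bounded_spin_double_commutator[OF x y], where c="(h x - h y)\<^sup>2"]
    unfolding norm_power .
  then show ?thesis
    unfolding H_def opnorm_cong[OF double_commutator_transverse_field[OF xy x y]]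
    by (rule opnorm_le_schur) (simp add: spin_const_def)
qed

subsection \<open>Bonds of the torus near the origin\<close>

lemma Omega_subset_Lambda_imp_le:
  assumes d: "d \<ge> 1" and N: "0 \<le> N" and sub: "Omega d N \<subseteq> Lambda d L"
  shows "N + 1 \<le> int L"
proof -
  let ?p = "(\<lambda>i. if i < d then - N else 0) :: site"
  have "?p \<in> Lambda d L" using sub N unfolding Omega_def by auto
  then have "\<forall>i<d. - int L + 1 \<le> ?p i" unfolding Lambda_def by blast
  moreover have "0 < d" using d by simp
  ultimately have "- int L + 1 \<le> ?p 0" by blast
  then show ?thesis using \<open>0 < d\<close> by simp
qed

lemma mod_eq_1_cases:
  fixes a m :: int
  assumes "0 < m" "- m \<le> a" "a < m" "a mod m = 1"
  shows "a = 1 \<or> a = 1 - m"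
proof (cases "a \<ge> 0")
  case True
  then show ?thesis using assms by (simp add: mod_pos_pos_trivial)
next
  case False
  have "a mod m = (a + m) mod m" by simp
  also have "\<dots> = a + m" using assms False by (intro mod_pos_pos_trivial) auto
  finally show ?thesis using assms by auto
qed

text \<open>Lambda_L represents the torus by the coordinates -L+1, ..., L, so a step
  from -L+1 downwards lands on L.\<close>

definition wrap :: "nat \<Rightarrow> int \<Rightarrow> int" where
  "wrap L c = (if c = - int L then int L else c)"

definition torus_nb :: "nat \<Rightarrow> site \<Rightarrow> nat \<Rightarrow> int \<Rightarrow> site" where
  "torus_nb L x i s = x(i := wrap L (x i + s))"

lemma adjT_sym: "adjT d L x y = adjT d L y x"
  unfolding adjT_def by (metis (no_types, opaque_lifting))

text \<open>The hypothesis x i \<le> L - 1 excludes the sites whose upward step wraps around.\<close>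

lemma adjT_imp_torus_nb:
  assumes L2: "int L \<ge> 2" and x: "x \<in> Lambda d L" and xb: "\<forall>i<d. x i \<le> int L - 1"
    and w: "w \<in> Lambda d L" and adj: "adjT d L x w"
  shows "\<exists>i<d. \<exists>s\<in>{1, -1}. w = torus_nb L x i s"
proof -
  obtain i where i: "i < d" and eq: "\<forall>j. j \<noteq> i \<longrightarrow> x j = w j"
    and c: "(x i - w i) mod (2 * int L) = 1 \<or> (w i - x i) mod (2 * int L) = 1"
    using adj unfolding adjT_def by blast
  have xi: "- int L + 1 \<le> x i" "x i \<le> int L - 1" using x xb i unfolding Lambda_def by auto
  have wi: "- int L + 1 \<le> w i" "w i \<le> int L" using w i unfolding Lambda_def by auto
  have w_eq: "w = x(i := w i)" using eq by (auto simp: fun_eq_iff)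
  from c have "w i = wrap L (x i + -1) \<or> w i = wrap L (x i + 1)"
  proof
    assume "(x i - w i) mod (2 * int L) = 1"
    then have "x i - w i = 1 \<or> x i - w i = 1 - 2 * int L"
      by (rule mod_eq_1_cases[rotated 3]) (use xi wi L2 in auto)
    then show ?thesis unfolding wrap_def using xi wi by auto
  next
    assume "(w i - x i) mod (2 * int L) = 1"
    then have "w i - x i = 1 \<or> w i - x i = 1 - 2 * int L"
      by (rule mod_eq_1_cases[rotated 3]) (use xi wi L2 in auto)
    then show ?thesis unfolding wrap_def using xi wi by auto
  qed
  then show ?thesis using i w_eq unfolding torus_nb_def by auto
qed

lemma torus_nb_in_Lambda:
  assumes x: "x \<in> Lambda d L" and xi: "x i \<le> int L - 1" and i: "i < d" and s: "s \<in> {1, -1}"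
  shows "torus_nb L x i s \<in> Lambda d L"
  using assms unfolding Lambda_def torus_nb_def wrap_def by auto

lemma adjT_torus_nb:
  assumes L2: "int L \<ge> 2" and x: "x \<in> Lambda d L" and xi: "x i \<le> int L - 1"
    and i: "i < d" and s: "s \<in> {1, -1}"
  shows "adjT d L x (torus_nb L x i s)"
proof -
  have xi': "- int L + 1 \<le> x i" using x i unfolding Lambda_def by auto
  have "(x i - torus_nb L x i s i) mod (2 * int L) = 1 \<or> (torus_nb L x i s i - x i) mod (2 * int L) = 1"
  proof (cases "s = 1")
    case True
    then show ?thesis using L2 xi xi' unfolding torus_nb_def wrap_def by auto
  next
    case False
    then have s: "s = -1" using s by auto
    show ?thesis
    proof (cases "x i - 1 = - int L")
      case True
      then have "x i - torus_nb L x i s i = 1 + (-1) * (2 * int L)" using s unfolding torus_nb_def wrap_def by auto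
      then have "(x i - torus_nb L x i s i) mod (2 * int L) = 1 mod (2 * int L)" by (metis mod_mult_self1)
      then show ?thesis using L2 by auto
    next
      case False
      then show ?thesis using s L2 unfolding torus_nb_def wrap_def by auto
    qed
  qed
  then show ?thesis unfolding adjT_def torus_nb_def using i by auto
qed

lemma torus_nb_ne:
  assumes "x i \<le> int L - 1" "s \<noteq> 0"
  shows "torus_nb L x i s \<noteq> x"
proof -
  have "wrap L (x i + s) \<noteq> x i" using assms unfolding wrap_def by auto
  then show ?thesis unfolding torus_nb_def by (metis fun_upd_same)
qed

lemma edgesT_at:
  assumes L2: "int L \<ge> 2" and x: "x \<in> Lambda d L" and xb: "\<forall>i<d. x i \<le> int L - 1"
  shows "{e\<in>edgesT d L. x \<in> e} = (\<lambda>(i, s). {x, torus_nb L x i s}) ` ({..<d} \<times> {1, -1})"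
proof
  show "{e\<in>edgesT d L. x \<in> e} \<subseteq> (\<lambda>(i, s). {x, torus_nb L x i s}) ` ({..<d} \<times> {1, -1})"
  proof
    fix e assume "e \<in> {e\<in>edgesT d L. x \<in> e}"
    then obtain a b where e: "e = {a, b}" and a: "a \<in> Lambda d L" and b: "b \<in> Lambda d L"
      and ab: "adjT d L a b" and xe: "x \<in> e" unfolding edgesT_def by blast
    obtain w where w: "w \<in> Lambda d L" "adjT d L x w" "e = {x, w}"
    proof (cases "x = a")
      case True
      then show ?thesis using that e b ab by blast
    next
      case False
      then have "x = b" using xe e by blast
      then show ?thesis using that e a ab adjT_sym by (simp add: insert_commute)
    qed
    obtain i s where "i < d" "s \<in> {1, -1}" "w = torus_nb L x i s"
      using adjT_imp_torus_nb[OF L2 x xb w(1,2)] by blast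
    then show "e \<in> (\<lambda>(i, s). {x, torus_nb L x i s}) ` ({..<d} \<times> {1, -1})"
      using w(3) by (intro image_eqI[where x="(i, s)"]) auto
  qed
  show "(\<lambda>(i, s). {x, torus_nb L x i s}) ` ({..<d} \<times> {1, -1}) \<subseteq> {e\<in>edgesT d L. x \<in> e}"
  proof
    fix e assume "e \<in> (\<lambda>(i, s). {x, torus_nb L x i s}) ` ({..<d} \<times> {1, -1})"
    then obtain i s where i: "i < d" and s: "s \<in> {1, -1}" and e: "e = {x, torus_nb L x i s}" by blast
    have xi: "x i \<le> int L - 1" using xb i by blast
    have "torus_nb L x i s \<in> Lambda d L" "adjT d L x (torus_nb L x i s)"
      using torus_nb_in_Lambda[OF x xi i s] adjT_torus_nb[OF L2 x xi i s] by auto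
    then show "e \<in> {e\<in>edgesT d L. x \<in> e}" using x e unfolding edgesT_def by blast
  qed
qed

lemma inj_on_torus_nb_edge:
  assumes L2: "int L \<ge> 2" and x: "x \<in> Lambda d L" and xb: "\<forall>i<d. x i \<le> int L - 1"
  shows "inj_on (\<lambda>(i, s). {x, torus_nb L x i s}) ({..<d} \<times> {1, -1})"
proof (rule inj_onI, clarify)
  fix i s j t assume i: "i < d" "s \<in> {1, -1::int}" and j: "j < d" "t \<in> {1, -1::int}"
    and eq: "{x, torus_nb L x i s} = {x, torus_nb L x j t}"
  have xi: "- int L + 1 \<le> x i" "x i \<le> int L - 1" using x xb i unfolding Lambda_def by auto
  have ne: "torus_nb L x i s \<noteq> x" "torus_nb L x j t \<noteq> x"
    using torus_nb_ne[of x i L s] torus_nb_ne[of x j L t] xb i j by auto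
  then have nb_eq: "torus_nb L x i s = torus_nb L x j t" using eq by (metis doubleton_eq_iff)
  show "i = j \<and> s = t"
  proof (cases "i = j")
    case True
    then have "wrap L (x i + s) = wrap L (x i + t)" using nb_eq unfolding torus_nb_def by (metis fun_upd_same)
    then show ?thesis using True i j xi L2 unfolding wrap_def by (auto split: if_splits)
  next
    case False
    then have "torus_nb L x j t i = x i" unfolding torus_nb_def by simp
    moreover have "torus_nb L x i s i \<noteq> x i"
      using ne(1) unfolding torus_nb_def by (metis fun_upd_triv fun_upd_same)
    ultimately show ?thesis using nb_eq by simp
  qed
qed

definition bond_field :: "nat \<Rightarrow> nat \<Rightarrow> nat \<Rightarrow> site \<Rightarrow> real" where
  "bond_field d L R z = (\<Sum>e\<in>{e\<in>edgesT d L. z \<in> e}. \<Sum>u\<in>e. fcut d R u)"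

lemma edgesT_subset: "e \<in> edgesT d L \<Longrightarrow> e \<subseteq> Lambda d L"
  unfolding edgesT_def by auto

lemma finite_edgesT: "finite (edgesT d L)"
proof -
  have "edgesT d L \<subseteq> Pow (Lambda d L)" using edgesT_subset by blast
  then show ?thesis using finite_Lambda finite_subset by blast
qed

lemma H1'_eq_transverse_field:
  "H1' d n L R = transverse_field d n L (\<lambda>z. complex_of_real (bond_field d L R z))"
proof (intro ext)
  fix \<sigma> \<tau>
  have "H1' d n L R \<sigma> \<tau> = (\<Sum>e\<in>edgesT d L. \<Sum>z\<in>{z\<in>Lambda d L. z \<in> e}.
      complex_of_real (\<Sum>u\<in>e. fcut d R u) * Sop n z 1 \<sigma> \<tau>)"
    unfolding H1'_def
  proof (rule sum.cong[OF refl])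
    fix e assume "e \<in> edgesT d L"
    then have "{z\<in>Lambda d L. z \<in> e} = e" using edgesT_subset by blast
    then show "complex_of_real (\<Sum>z\<in>e. fcut d R z) * (\<Sum>z\<in>e. Sop n z 1 \<sigma> \<tau>) =
        (\<Sum>z\<in>{z\<in>Lambda d L. z \<in> e}. complex_of_real (\<Sum>u\<in>e. fcut d R u) * Sop n z 1 \<sigma> \<tau>)"
      by (simp add: sum_distrib_left)
  qed
  also have "\<dots> = (\<Sum>z\<in>Lambda d L. \<Sum>e\<in>{e\<in>edgesT d L. z \<in> e}.
      complex_of_real (\<Sum>u\<in>e. fcut d R u) * Sop n z 1 \<sigma> \<tau>)"
    by (rule sum.swap_restrict[OF finite_edgesT finite_Lambda])
  finally show "H1' d n L R \<sigma> \<tau> = transverse_field d n L (\<lambda>z. complex_of_real (bond_field d L R z)) \<sigma> \<tau>"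
    unfolding transverse_field_def opsum_def opscale_def bond_field_def by (simp add: sum_distrib_right)
qed

lemma bond_field_eq:
  assumes L2: "int L \<ge> 2" and x: "x \<in> Lambda d L" and xb: "\<forall>i<d. x i \<le> int L - 1"
  shows "bond_field d L R x = (\<Sum>(i, s)\<in>{..<d} \<times> {1, -1}. fcut d R x + fcut d R (torus_nb L x i s))"
proof -
  have "bond_field d L R x = (\<Sum>(i, s)\<in>{..<d} \<times> {1, -1}. \<Sum>u\<in>{x, torus_nb L x i s}. fcut d R u)"
    unfolding bond_field_def edgesT_at[OF L2 x xb]
    by (subst sum.reindex[OF inj_on_torus_nb_edge[OF L2 x xb]]) (simp add: case_prod_beta)
  also have "\<dots> = (\<Sum>(i, s)\<in>{..<d} \<times> {1, -1}. fcut d R x + fcut d R (torus_nb L x i s))"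
  proof (intro sum.cong refl, clarify)
    fix i s assume "i < d" "s \<in> {1, -1::int}"
    then have "torus_nb L x i s \<noteq> x" using torus_nb_ne[of x i L s] xb by auto
    then show "(\<Sum>u\<in>{x, torus_nb L x i s}. fcut d R u) = fcut d R x + fcut d R (torus_nb L x i s)"
      by simp
  qed
  finally show ?thesis .
qed

subsection \<open>The cutoff function\<close>

lemma supnorm_le_iff: "d \<ge> 1 \<Longrightarrow> supnorm d u \<le> N \<longleftrightarrow> (\<forall>i<d. \<bar>u i\<bar> \<le> N)"
  unfolding supnorm_def by (subst Max_le_iff) (auto simp: lessThan_empty_iff)

lemma abs_le_supnorm: "i < d \<Longrightarrow> \<bar>u i\<bar> \<le> supnorm d u"
  unfolding supnorm_def by (rule Max_ge) auto

lemma supnorm_attained: "d \<ge> 1 \<Longrightarrow> \<exists>i<d. supnorm d u = \<bar>u i\<bar>"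
proof -
  assume "d \<ge> 1"
  then have "supnorm d u \<in> (\<lambda>i. \<bar>u i\<bar>) ` {..<d}" unfolding supnorm_def by (intro Max_in) (auto simp: lessThan_empty_iff)
  then show ?thesis by auto
qed

lemma supnorm_diff_le:
  assumes d: "d \<ge> 1" and close: "\<forall>i<d. \<bar>u i - v i\<bar> \<le> 1"
  shows "\<bar>supnorm d u - supnorm d v\<bar> \<le> 1"
proof -
  obtain i where i: "i < d" "supnorm d u = \<bar>u i\<bar>" using supnorm_attained[OF d] by blast
  obtain j where j: "j < d" "supnorm d v = \<bar>v j\<bar>" using supnorm_attained[OF d] by blast
  have "\<bar>v i\<bar> \<le> supnorm d v" "\<bar>u j\<bar> \<le> supnorm d u" using abs_le_supnorm[OF i(1), of v] abs_le_supnorm[OF j(1), of u] by auto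
  moreover have "\<bar>u i - v i\<bar> \<le> 1" "\<bar>u j - v j\<bar> \<le> 1" using close i j by auto
  ultimately show ?thesis using i j by linarith
qed

lemma Omega_iff_supnorm:
  "d \<ge> 1 \<Longrightarrow> \<forall>i\<ge>d. u i = 0 \<Longrightarrow> u \<in> Omega d N \<longleftrightarrow> supnorm d u \<le> N"
  unfolding Omega_def by (auto simp: supnorm_le_iff)

definition clamp :: "real \<Rightarrow> real" where
  "clamp a = max 0 (min 1 a)"

lemma clamp_diff_le: "\<bar>clamp a - clamp b\<bar> \<le> \<bar>a - b\<bar>"
  unfolding clamp_def by (auto simp: max_def min_def)

lemma fcut_eq_clamp:
  assumes d: "d \<ge> 1" and R: "R \<ge> 1" and u: "\<forall>i\<ge>d. u i = 0"
  shows "fcut d R u = clamp ((2 * real R + 1 - real_of_int (supnorm d u)) / real R)"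
proof -
  let ?t = "supnorm d u"
  have R0: "real R > 0" using R by simp
  consider "?t \<le> int R + 1" | "int R + 1 < ?t" "?t \<le> 2 * int R" | "2 * int R < ?t" by linarith
  then show ?thesis
  proof cases
    case 1
    then have "1 \<le> (2 * real R + 1 - real_of_int ?t) / real R" using R0 by (simp add: field_simps)
    then show ?thesis unfolding fcut_def Omega_iff_supnorm[OF d u] using 1 by (simp add: clamp_def)
  next
    case 2
    have "(2 * real R + 1 - real_of_int ?t) / real R = 1 - (real_of_int ?t - (real R + 1)) / real R"
      using R0 by (simp add: field_simps)
    moreover have "0 \<le> 1 - (real_of_int ?t - (real R + 1)) / real R"
      "1 - (real_of_int ?t - (real R + 1)) / real R \<le> 1"
      using 2 R0 by (auto simp: field_simps)
    ultimately show ?thesis unfolding fcut_def Omega_iff_supnorm[OF d u] using 2 by (simp add: clamp_def)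
  next
    case 3
    then have "(2 * real R + 1 - real_of_int ?t) / real R \<le> 0" using R0 by (simp add: field_simps)
    then show ?thesis unfolding fcut_def Omega_iff_supnorm[OF d u] using 3 R by (simp add: clamp_def)
  qed
qed

lemma fcut_diff_le:
  assumes d: "d \<ge> 1" and R: "R \<ge> 1" and u: "\<forall>i\<ge>d. u i = 0" and v: "\<forall>i\<ge>d. v i = 0"
    and close: "\<forall>i<d. \<bar>u i - v i\<bar> \<le> 1"
  shows "\<bar>fcut d R u - fcut d R v\<bar> \<le> 1 / real R"
proof -
  have R0: "real R > 0" using R by simp
  have "\<bar>fcut d R u - fcut d R v\<bar> \<le> \<bar>(2 * real R + 1 - real_of_int (supnorm d u)) / real R
      - (2 * real R + 1 - real_of_int (supnorm d v)) / real R\<bar>"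
    unfolding fcut_eq_clamp[OF d R u] fcut_eq_clamp[OF d R v] by (rule clamp_diff_le)
  also have "(2 * real R + 1 - real_of_int (supnorm d u)) / real R
      - (2 * real R + 1 - real_of_int (supnorm d v)) / real R = real_of_int (supnorm d v - supnorm d u) / real R"
    using R0 by (simp add: field_simps)
  also have "\<bar>real_of_int (supnorm d v - supnorm d u) / real R\<bar>
      = \<bar>real_of_int (supnorm d u - supnorm d v)\<bar> / real R"
    by (simp add: abs_divide abs_minus_commute)
  also have "\<dots> \<le> 1 / real R"
    using supnorm_diff_le[OF d close] R0 by (intro divide_right_mono) linarith+
  finally show ?thesis .
qed

lemma fcut_eq_0:
  assumes d: "d \<ge> 1" and R: "R \<ge> 1" and u: "\<forall>i\<ge>d. u i = 0" and i: "i < d"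
    and far: "2 * int R + 1 \<le> \<bar>u i\<bar>"
  shows "fcut d R u = 0"
proof -
  have "2 * int R + 1 \<le> supnorm d u" using abs_le_supnorm[OF i, of u] far by linarith
  then have "(2 * real R + 1 - real_of_int (supnorm d u)) / real R \<le> 0"
    using R by (simp add: divide_nonpos_pos)
  then show ?thesis unfolding fcut_eq_clamp[OF d R u] clamp_def by simp
qed

text \<open>Wrapping around the torus only happens where f vanishes anyway.\<close>

lemma fcut_torus_nb:
  assumes d: "d \<ge> 1" and R: "R \<ge> 1" and L: "2 * int R + 2 \<le> int L"
    and x: "x \<in> Omega d (2 * int R + 1)" and i: "i < d" and s: "s \<in> {1, -1}"
  shows "fcut d R (torus_nb L x i s) = fcut d R (x(i := x i + s))"
proof (cases "x i + s = - int L")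
  case True
  have x0: "\<forall>j\<ge>d. x j = 0" using x unfolding Omega_def by auto
  have "fcut d R (torus_nb L x i s) = 0"
    by (rule fcut_eq_0[OF d R _ i]) (use x0 i True L in \<open>auto simp: torus_nb_def wrap_def\<close>)
  moreover have "fcut d R (x(i := x i + s)) = 0"
    by (rule fcut_eq_0[OF d R _ i]) (use x0 i True L in auto)
  ultimately show ?thesis by simp
next
  case False
  then show ?thesis unfolding torus_nb_def wrap_def by simp
qed

lemma bond_field_diff_le:
  assumes d: "d \<ge> 1" and R: "R \<ge> 1" and sub: "Omega d (2 * int R + 1) \<subseteq> Lambda d L"
    and x: "x \<in> Omega d (2 * int R + 1)" and y: "y \<in> Omega d (2 * int R + 1)"
    and close: "\<forall>i<d. \<bar>x i - y i\<bar> \<le> 1"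
  shows "\<bar>bond_field d L R x - bond_field d L R y\<bar> \<le> 4 * real d / real R"
proof -
  have L: "2 * int R + 2 \<le> int L" using Omega_subset_Lambda_imp_le[OF d _ sub] by simp
  then have L2: "int L \<ge> 2" using R by linarith
  have interior: "\<forall>i<d. u i \<le> int L - 1" if "u \<in> Omega d (2 * int R + 1)" for u
    using that L unfolding Omega_def by force
  have x0: "\<forall>i\<ge>d. x i = 0" and y0: "\<forall>i\<ge>d. y i = 0" using x y unfolding Omega_def by auto
  have xL: "x \<in> Lambda d L" and yL: "y \<in> Lambda d L" using x y sub by auto
  let ?P = "{..<d} \<times> {1, -1::int}"
  have "bond_field d L R x - bond_field d L R y = (\<Sum>(i, s)\<in>?P.
      (fcut d R x - fcut d R y) + (fcut d R (x(i := x i + s)) - fcut d R (y(i := y i + s))))"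
    unfolding bond_field_eq[OF L2 xL interior[OF x]] bond_field_eq[OF L2 yL interior[OF y]]
      sum_subtractf[symmetric]
    by (intro sum.cong refl) (auto simp: fcut_torus_nb[OF d R L x] fcut_torus_nb[OF d R L y])
  also have "\<bar>\<dots>\<bar> \<le> (\<Sum>(i, s)\<in>?P. 2 / real R)"
  proof (rule order_trans[OF sum_abs], rule sum_mono, clarify)
    fix i s assume i: "i < d" and "s \<in> {1, -1::int}"
    have "\<bar>fcut d R x - fcut d R y\<bar> \<le> 1 / real R" by (rule fcut_diff_le[OF d R x0 y0 close])
    moreover have "\<bar>fcut d R (x(i := x i + s)) - fcut d R (y(i := y i + s))\<bar> \<le> 1 / real R"
      by (rule fcut_diff_le[OF d R]) (use x0 y0 close i in auto)
    ultimately show "\<bar>fcut d R x - fcut d R y + (fcut d R (x(i := x i + s)) - fcut d R (y(i := y i + s)))\<bar>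
        \<le> 2 / real R"
      by linarith
  qed
  also have "\<dots> = 4 * real d / real R" by (simp add: card_cartesian_product)
  finally show ?thesis .
qed

subsection \<open>Summing over the bonds\<close>

lemma adjZ_imp_close: "adjZ d x y \<Longrightarrow> \<forall>i<d. \<bar>x i - y i\<bar> \<le> 1"
proof (intro allI impI)
  fix i assume adj: "adjZ d x y" and i: "i < d"
  have "(x i - y i)\<^sup>2 \<le> (\<Sum>j<d. (x j - y j)\<^sup>2)"
    by (rule member_le_sum) (use i in auto)
  then have "(x i - y i)\<^sup>2 \<le> 1" using adj unfolding adjZ_def by simp
  then show "\<bar>x i - y i\<bar> \<le> 1" by (simp add: abs_square_le_1)
qed

lemma adjZ_imp_neq: "adjZ d x y \<Longrightarrow> x \<noteq> y"
  unfolding adjZ_def by auto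

text \<open>sdot_edge picks an ordering of the bond by Hilbert choice; both orderings
  satisfy the symmetric conditions needed below.\<close>

lemma sdot_edge_edgesZ:
  assumes "e \<in> edgesZ d A"
  obtains x y where "x \<in> A" "y \<in> A" "x \<noteq> y" "\<forall>i<d. \<bar>x i - y i\<bar> \<le> 1"
    "sdot_edge d n L e = sdot d n L x y"
proof -
  obtain x y where e: "e = {x, y}" and xy: "x \<in> A" "y \<in> A" "adjZ d x y"
    using assms unfolding edgesZ_def by blast
  define p where "p = (SOME p. e = {fst p, snd p})"
  have "e = {fst p, snd p}" unfolding p_def by (rule someI[where x="(x, y)"]) (simp add: e)
  then have "(fst p, snd p) = (x, y) \<or> (fst p, snd p) = (y, x)" using e by (auto simp: doubleton_eq_iff)
  moreover have "sdot_edge d n L e = sdot d n L (fst p) (snd p)" unfolding sdot_edge_def p_def Let_def ..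
  moreover have "x \<noteq> y" "\<forall>i<d. \<bar>x i - y i\<bar> \<le> 1" "\<forall>i<d. \<bar>y i - x i\<bar> \<le> 1"
    using adjZ_imp_neq adjZ_imp_close xy(3) by (fastforce simp: abs_minus_commute)+
  ultimately show ?thesis using that xy by auto
qed

lemma opnorm_double_commutator_H1'_le:
  assumes d: "d \<ge> 1" and R: "R \<ge> 1" and sub: "Omega d (2 * int R + 1) \<subseteq> Lambda d L"
    and x: "x \<in> Omega d (2 * int R + 1)" and y: "y \<in> Omega d (2 * int R + 1)" and xy: "x \<noteq> y"
    and close: "\<forall>i<d. \<bar>x i - y i\<bar> \<le> 1"
  shows "opnorm (confs d n L) (opcomm (confs d n L)
      (opcomm (confs d n L) (H1' d n L R) (sdot d n L x y)) (H1' d n L R))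
     \<le> 16 * (real d)\<^sup>2 * spin_const n / (real R)\<^sup>2"
proof -
  let ?h = "bond_field d L R"
  have "opnorm (confs d n L) (opcomm (confs d n L)
      (opcomm (confs d n L) (H1' d n L R) (sdot d n L x y)) (H1' d n L R))
     \<le> (cmod (complex_of_real (?h x) - complex_of_real (?h y)))\<^sup>2 * spin_const n"
    unfolding H1'_eq_transverse_field
    by (rule opnorm_double_commutator_transverse_field[OF xy]) (use x y sub in auto)
  also have "\<dots> \<le> (4 * real d / real R)\<^sup>2 * spin_const n"
    using bond_field_diff_le[OF d R sub x y close]
    by (intro mult_right_mono power_mono) (simp_all add: spin_const_def flip: of_real_diff)
  also have "\<dots> = 16 * (real d)\<^sup>2 * spin_const n / (real R)\<^sup>2"
    by (simp add: power_divide power_mult_distrib)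
  finally show ?thesis .
qed

lemma card_edgesZ_Omega_le: "card (edgesZ d (Omega d N)) \<le> nat (2 * N + 1) ^ d * 3 ^ d"
proof -
  let ?f = "\<lambda>(x, w). {x, (\<lambda>i. x i + w i)} :: site set"
  have sub: "edgesZ d (Omega d N) \<subseteq> ?f ` (Omega d N \<times> Omega d 1)"
  proof
    fix e assume "e \<in> edgesZ d (Omega d N)"
    then obtain x y where e: "e = {x, y}" and x: "x \<in> Omega d N" and y: "y \<in> Omega d N"
      and adj: "adjZ d x y"
      unfolding edgesZ_def by blast
    have "(\<lambda>i. y i - x i) \<in> Omega d 1"
      using adjZ_imp_close[OF adj] x y unfolding Omega_def by (auto simp: abs_minus_commute)
    moreover have "e = ?f (x, (\<lambda>i. y i - x i))" using e by auto
    ultimately show "e \<in> ?f ` (Omega d N \<times> Omega d 1)" using x by blast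
  qed
  have fin: "finite (Omega d N \<times> Omega d 1)" using finite_card_Omega by auto
  have "card (edgesZ d (Omega d N)) \<le> card (Omega d N \<times> Omega d 1)"
    using card_mono[OF finite_imageI[OF fin] sub] card_image_le[OF fin] by (rule le_trans)
  also have "\<dots> \<le> nat (2 * N + 1) ^ d * nat (2 * 1 + 1) ^ d"
    unfolding card_cartesian_product using finite_card_Omega[of d N] finite_card_Omega[of d 1]
    by (intro mult_le_mono) auto
  finally show ?thesis by simp
qed

lemma real_card_edgesZ_le:
  assumes "R \<ge> 1"
  shows "real (card (edgesZ d (Omega d (2 * int R + 1)))) \<le> (21 * real R) ^ d"
proof -
  have "real (card (edgesZ d (Omega d (2 * int R + 1))))
      \<le> real (nat (2 * (2 * int R + 1) + 1) ^ d * 3 ^ d)"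
    using card_edgesZ_Omega_le by (simp only: of_nat_le_iff)
  also have "\<dots> = (3 + 4 * real R) ^ d * 3 ^ d" by simp
  also have "\<dots> \<le> (7 * real R) ^ d * 3 ^ d"
    using assms by (intro mult_right_mono power_mono) auto
  also have "\<dots> = (21 * real R) ^ d"
    by (simp add: power_mult_distrib flip: power_mult_distrib[of "7::real" 3])
  finally show ?thesis .
qed

theorem lemma5p3:
  fixes d twoS :: nat
  assumes "d \<ge> 1"
  shows "\<exists>K::real. \<forall>R L :: nat. R \<ge> 1 \<longrightarrow> Omega d (2 * int R + 1) \<subseteq> Lambda d L \<longrightarrow>
     (\<Sum>e\<in>edgesZ d (Omega d (2 * int R + 1)).
        opnorm (confs d twoS L)
          (opcomm (confs d twoS L)
             (opcomm (confs d twoS L) (H1' d twoS L R) (sdot_edge d twoS L e))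
             (H1' d twoS L R)))
     \<le> K * real R powr (real d - 2)"
proof (intro exI allI impI)
  fix R L :: nat assume R: "R \<ge> 1" and sub: "Omega d (2 * int R + 1) \<subseteq> Lambda d L"
  let ?C = "confs d twoS L" and ?E = "edgesZ d (Omega d (2 * int R + 1))"
  let ?B = "16 * (real d)\<^sup>2 * spin_const twoS / (real R)\<^sup>2"
  have "(\<Sum>e\<in>?E. opnorm ?C (opcomm ?C (opcomm ?C (H1' d twoS L R) (sdot_edge d twoS L e)) (H1' d twoS L R)))
      \<le> real (card ?E) * ?B"
  proof (rule sum_bounded_above)
    fix e assume "e \<in> ?E"
    then obtain x y where x: "x \<in> Omega d (2 * int R + 1)" and y: "y \<in> Omega d (2 * int R + 1)"
      and xy: "x \<noteq> y" and close: "\<forall>i<d. \<bar>x i - y i\<bar> \<le> 1"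
      and e: "sdot_edge d twoS L e = sdot d twoS L x y"
      by (rule sdot_edge_edgesZ)
    show "opnorm ?C (opcomm ?C (opcomm ?C (H1' d twoS L R) (sdot_edge d twoS L e)) (H1' d twoS L R)) \<le> ?B"
      unfolding e by (rule opnorm_double_commutator_H1'_le[OF assms R sub x y xy close])
  qed
  also have "\<dots> \<le> (21 * real R) ^ d * ?B"
    by (rule mult_right_mono[OF real_card_edgesZ_le[OF R]]) (simp add: spin_const_def)
  also have "\<dots> = (21 ^ d * 16 * (real d)\<^sup>2 * spin_const twoS) * real R powr (real d - 2)"
    using R by (simp add: powr_diff powr_realpow power_mult_distrib)
  finally show "(\<Sum>e\<in>?E. opnorm ?C (opcomm ?C (opcomm ?C (H1' d twoS L R) (sdot_edge d twoS L e)) (H1' d twoS L R)))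
      \<le> (21 ^ d * 16 * (real d)\<^sup>2 * spin_const twoS) * real R powr (real d - 2)" .
qed

end
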